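(* For all $n\ge2$, $R_{n+1}\ge R_n$.
   Context: Scheduling on two machines with $n$ tasks. A processing-time matrix is $T\in\mathbb{R}_{++}^{2\times n}$; an allocation is $X\in\{0,1\}^{2\times n}$ with $X_{1j}+X_{2j}=1$; makespan $M(X,T)=\max_{i\in\{1,2\}}\sum_jX_{ij}T_{ij}$; $M^*(T)=\min_XM(X,T)$. $\mathcal{P}_n$ is the set of Borel probability measures on $\mathbb{R}^n$ supported in $\mathbb{R}_{++}^n$. For $\mathbb{P}\in\mathcal{P}_n$, algorithm $\mathcal{A}^{\mathbb{P}}$ draws $\mathbf{z}\sim\mathbb{P}$ and sends task $j$ to machine 1 iff $T_{1j}/T_{2j}<z_j$ (else to machine 2); $M(\mathbb{P},T)$ is its expected makespan, $R_n(\mathbb{P})=\sup_{T\in\mathbb{R}_{++}^{2\times n}}M(\mathbb{P},T)/M^*(T)\in[1,\infty]$, and $R_n=\inf_{\mathbb{P}\in\mathcal{P}_n}R_n(\mathbb{P})$. *)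

theory Defs
  imports "HOL-Probability.Probability"
begin

text \<open>An allocation X in {0,1}^(2 x n) is encoded by the set S of tasks sent to machine 1
  (X_1j = 1 iff j in S, X_2j = 1 iff j in {..<n} - S).\<close>

definition proc_matrices :: "nat \<Rightarrow> (nat \<Rightarrow> nat \<Rightarrow> real) set" where
  "proc_matrices n = {T. \<forall>i\<in>{1,2}. \<forall>j<n. 0 < T i j}"

definition makespan :: "nat \<Rightarrow> (nat \<Rightarrow> nat \<Rightarrow> real) \<Rightarrow> nat set \<Rightarrow> real" where
  "makespan n T S = max (\<Sum>j\<in>S. T 1 j) (\<Sum>j\<in>{..<n} - S. T 2 j)"

definition opt_makespan :: "nat \<Rightarrow> (nat \<Rightarrow> nat \<Rightarrow> real) \<Rightarrow> real" where
  "opt_makespan n T = Min ((\<lambda>S. makespan n T S) ` Pow {..<n})"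

definition prob_measures :: "nat \<Rightarrow> (nat \<Rightarrow> real) measure set" where
  "prob_measures n = {P. prob_space P \<and>
      sets P = sets (PiM {..<n} (\<lambda>_. (borel :: real measure))) \<and>
      (AE z in P. \<forall>j<n. 0 < z j)}"

definition alloc :: "nat \<Rightarrow> (nat \<Rightarrow> nat \<Rightarrow> real) \<Rightarrow> (nat \<Rightarrow> real) \<Rightarrow> nat set" where
  "alloc n T z = {j. j < n \<and> T 1 j / T 2 j < z j}"

definition exp_makespan :: "nat \<Rightarrow> (nat \<Rightarrow> real) measure \<Rightarrow> (nat \<Rightarrow> nat \<Rightarrow> real) \<Rightarrow> real" where
  "exp_makespan n P T = (\<integral>z. makespan n T (alloc n T z) \<partial>P)"

definition ratio_P :: "nat \<Rightarrow> (nat \<Rightarrow> real) measure \<Rightarrow> ereal" where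
  "ratio_P n P = (SUP T \<in> proc_matrices n. ereal (exp_makespan n P T / opt_makespan n T))"

definition ratio :: "nat \<Rightarrow> ereal" where
  "ratio n = (INF P \<in> prob_measures n. ratio_P n P)"

end

theory Submission
  imports Defs
begin

text \<open>Run a threshold algorithm for n+1 tasks on n tasks by ignoring the last threshold,
  i.e. use the marginal law of the first n thresholds. On an instance T with n tasks it allocates
  exactly as the original algorithm does on T extended by a dummy task of size c on both
  machines, so its makespan is pointwise no larger. The dummy task raises the optimum by at most
  c, hence the ratio of the marginal algorithm on T is at most R_{n+1}(P) (OPT + c) / OPT; let
  c tend to 0.\<close>

abbreviation borel_vectors :: "nat \<Rightarrow> (nat \<Rightarrow> real) measure" where
  "borel_vectors n \<equiv> PiM {..<n} (\<lambda>_. borel)"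

lemma makespan_alloc_eq:
  "makespan n T (alloc n T z) =
     max (\<Sum>j<n. if T 1 j / T 2 j < z j then T 1 j else 0)
         (\<Sum>j<n. if T 1 j / T 2 j < z j then 0 else T 2 j)"
proof -
  have "alloc n T z = {j\<in>{..<n}. T 1 j / T 2 j < z j}"
    and "{..<n} - alloc n T z = {j\<in>{..<n}. \<not> T 1 j / T 2 j < z j}"
    unfolding alloc_def by auto
  then show ?thesis
    unfolding makespan_def
    by (simp only: sum.inter_filter[OF finite_lessThan]) (intro arg_cong2[where f = max] sum.cong, auto)
qed

lemma measurable_threshold_component:
  assumes "j < k"
  shows "(\<lambda>z. if c < z j then a else b :: real) \<in> borel_measurable (borel_vectors k)"
proof -
  have "(\<lambda>t::real. if c < t then a else b) \<in> borel_measurable borel" by measurable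
  then show ?thesis
    using measurable_component_singleton[of j "{..<k}" "\<lambda>_. borel"] assms
    by (simp add: measurable_compose)
qed

lemma measurable_makespan_alloc:
  assumes "n \<le> k"
  shows "(\<lambda>z. makespan n T (alloc n T z)) \<in> borel_measurable (borel_vectors k)"
  unfolding makespan_alloc_eq using assms
  by (intro borel_measurable_max borel_measurable_sum measurable_threshold_component) auto

lemma makespan_nonneg:
  assumes "T \<in> proc_matrices n" "S \<subseteq> {..<n}"
  shows "0 \<le> makespan n T S"
  using assms unfolding makespan_def proc_matrices_def
  by (intro max.coboundedI1 sum_nonneg) (auto intro: less_imp_le)

lemma makespan_pos:
  assumes T: "T \<in> proc_matrices n" and S: "S \<subseteq> {..<n}" and "0 < n"
  shows "0 < makespan n T S"
proof (cases "0 \<in> S")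
  case True
  then have "T 1 0 \<le> (\<Sum>j\<in>S. T 1 j)"
    using T S finite_subset[OF S] by (intro member_le_sum) (auto simp: proc_matrices_def less_imp_le)
  moreover have "0 < T 1 0" using T \<open>0 < n\<close> by (simp add: proc_matrices_def)
  ultimately show ?thesis unfolding makespan_def by linarith
next
  case False
  then have "T 2 0 \<le> (\<Sum>j\<in>{..<n} - S. T 2 j)"
    using T \<open>0 < n\<close> by (intro member_le_sum) (auto simp: proc_matrices_def less_imp_le)
  moreover have "0 < T 2 0" using T \<open>0 < n\<close> by (simp add: proc_matrices_def)
  ultimately show ?thesis unfolding makespan_def by linarith
qed

lemma makespan_le_total:
  assumes "T \<in> proc_matrices n" "S \<subseteq> {..<n}"
  shows "makespan n T S \<le> (\<Sum>j<n. T 1 j + T 2 j)"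
proof -
  have nonneg: "0 \<le> T i j" if "i \<in> {1, 2}" "j < n" for i j
    using assms(1) that by (auto simp: proc_matrices_def less_imp_le)
  have "(\<Sum>j\<in>S. T 1 j) \<le> (\<Sum>j<n. T 1 j)"
    using assms(2) nonneg by (intro sum_mono2) auto
  also have "\<dots> \<le> (\<Sum>j<n. T 1 j + T 2 j)"
    using nonneg by (intro sum_mono) simp
  finally have 1: "(\<Sum>j\<in>S. T 1 j) \<le> (\<Sum>j<n. T 1 j + T 2 j)" .
  have "(\<Sum>j\<in>{..<n} - S. T 2 j) \<le> (\<Sum>j<n. T 2 j)"
    using nonneg by (intro sum_mono2) auto
  also have "\<dots> \<le> (\<Sum>j<n. T 1 j + T 2 j)"
    using nonneg by (intro sum_mono) simp
  finally show ?thesis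
    using 1 unfolding makespan_def by simp
qed

lemma alloc_subset: "alloc n T z \<subseteq> {..<n}"
  by (auto simp: alloc_def)

lemma integrable_makespan_alloc:
  assumes "prob_space P" "sets P = sets (borel_vectors k)" "n \<le> k" "T \<in> proc_matrices n"
  shows "integrable P (\<lambda>z. makespan n T (alloc n T z))"
proof -
  interpret prob_space P by fact
  have "(\<lambda>z. makespan n T (alloc n T z)) \<in> borel_measurable P"
    using measurable_makespan_alloc[OF assms(3)] measurable_cong_sets[OF assms(2) refl] by blast
  moreover have "norm (makespan n T (alloc n T z)) \<le> (\<Sum>j<n. T 1 j + T 2 j)" for z
    using makespan_nonneg[OF assms(4) alloc_subset] makespan_le_total[OF assms(4) alloc_subset]
    by simp
  ultimately show ?thesis
    by (intro integrable_const_bound) auto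
qed

lemma opt_makespan_le:
  assumes "S \<subseteq> {..<n}"
  shows "opt_makespan n T \<le> makespan n T S"
  using assms unfolding opt_makespan_def by (intro Min_le) auto

lemma opt_makespan_attained: "\<exists>S\<subseteq>{..<n}. opt_makespan n T = makespan n T S"
proof -
  have "opt_makespan n T \<in> (\<lambda>S. makespan n T S) ` Pow {..<n}"
    unfolding opt_makespan_def by (intro Min_in) auto
  then show ?thesis by auto
qed

lemma opt_makespan_pos:
  assumes "T \<in> proc_matrices n" "0 < n"
  shows "0 < opt_makespan n T"
  using opt_makespan_attained makespan_pos assms by metis

definition add_task :: "nat \<Rightarrow> (nat \<Rightarrow> nat \<Rightarrow> real) \<Rightarrow> real \<Rightarrow> nat \<Rightarrow> nat \<Rightarrow> real" where
  "add_task n T c = (\<lambda>i j. if j = n then c else T i j)"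

lemma add_task_proc_matrices:
  assumes "T \<in> proc_matrices n" "0 < c"
  shows "add_task n T c \<in> proc_matrices (Suc n)"
  using assms by (auto simp: proc_matrices_def add_task_def less_Suc_eq)

lemma add_task_old [simp]: "j < n \<Longrightarrow> add_task n T c i j = T i j"
  and add_task_new [simp]: "add_task n T c i n = c"
  by (simp_all add: add_task_def)

lemma makespan_alloc_add_task:
  assumes "0 \<le> c"
  shows "makespan n T (alloc n T z)
    \<le> makespan (Suc n) (add_task n T c) (alloc (Suc n) (add_task n T c) z)"
proof -
  let ?T' = "add_task n T c"
  have "(\<Sum>j<n. if ?T' 1 j / ?T' 2 j < z j then ?T' 1 j else 0)
      = (\<Sum>j<n. if T 1 j / T 2 j < z j then T 1 j else 0)"
    and "(\<Sum>j<n. if ?T' 1 j / ?T' 2 j < z j then 0 else ?T' 2 j)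
      = (\<Sum>j<n. if T 1 j / T 2 j < z j then 0 else T 2 j)"
    by (auto intro!: sum.cong)
  then show ?thesis
    unfolding makespan_alloc_eq sum.lessThan_Suc using assms by (auto simp: max_def)
qed

lemma opt_makespan_add_task:
  assumes "0 \<le> c"
  shows "opt_makespan (Suc n) (add_task n T c) \<le> opt_makespan n T + c"
proof -
  let ?T' = "add_task n T c"
  obtain S where S: "S \<subseteq> {..<n}" "opt_makespan n T = makespan n T S"
    using opt_makespan_attained by blast
  have "(\<Sum>j\<in>insert n S. ?T' 1 j) = c + (\<Sum>j\<in>S. T 1 j)"
    using S(1) finite_subset by (subst sum.insert) (auto intro!: sum.cong)
  moreover have "(\<Sum>j\<in>{..<Suc n} - insert n S. ?T' 2 j) = (\<Sum>j\<in>{..<n} - S. T 2 j)"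
    by (auto simp: lessThan_Suc intro!: sum.cong)
  ultimately have "makespan (Suc n) ?T' (insert n S) \<le> opt_makespan n T + c"
    using S(2) assms unfolding makespan_def by linarith
  then show ?thesis
    using opt_makespan_le[of "insert n S" "Suc n" ?T'] S(1) by fastforce
qed

definition marginal :: "nat \<Rightarrow> (nat \<Rightarrow> real) measure \<Rightarrow> (nat \<Rightarrow> real) measure" where
  "marginal n P = distr P (borel_vectors n) (\<lambda>z. restrict z {..<n})"

lemma measurable_restrict_lessThan:
  assumes "sets P = sets (borel_vectors k)" "n \<le> k"
  shows "(\<lambda>z. restrict z {..<n}) \<in> measurable P (borel_vectors n)"
  unfolding measurable_cong_sets[OF assms(1) refl] using assms(2)
  by (intro measurable_restrict_subset) auto

lemma marginal_prob_measures:
  assumes P: "P \<in> prob_measures k" and "n \<le> k"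
  shows "marginal n P \<in> prob_measures n"
proof -
  have "prob_space P" "sets P = sets (borel_vectors k)" and pos: "AE z in P. \<forall>j<k. 0 < z j"
    using P by (auto simp: prob_measures_def)
  then have r: "(\<lambda>z. restrict z {..<n}) \<in> measurable P (borel_vectors n)"
    using measurable_restrict_lessThan \<open>n \<le> k\<close> by blast
  have "{z \<in> space (borel_vectors n). \<forall>j<n. 0 < z j} \<in> sets (borel_vectors n)"
    by measurable
  moreover have "AE z in P. \<forall>j<n. 0 < restrict z {..<n} j"
    using pos by eventually_elim (use \<open>n \<le> k\<close> in auto)
  ultimately have "AE z in marginal n P. \<forall>j<n. 0 < z j"
    unfolding marginal_def by (subst AE_distr_iff[OF r]) auto
  then show ?thesis
    unfolding prob_measures_def marginal_def
    using prob_space.prob_space_distr[OF \<open>prob_space P\<close> r] by auto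
qed

lemma exp_makespan_marginal:
  assumes "P \<in> prob_measures k" "n \<le> k"
  shows "exp_makespan n (marginal n P) T = (\<integral>z. makespan n T (alloc n T z) \<partial>P)"
proof -
  have r: "(\<lambda>z. restrict z {..<n}) \<in> measurable P (borel_vectors n)"
    using assms measurable_restrict_lessThan by (auto simp: prob_measures_def)
  have "alloc n T (restrict z {..<n}) = alloc n T z" for z
    by (auto simp: alloc_def)
  then show ?thesis
    unfolding exp_makespan_def marginal_def
    by (simp add: integral_distr[OF r measurable_makespan_alloc])
qed

lemma exp_makespan_marginal_le_ratio_P:
  assumes P: "P \<in> prob_measures (Suc n)" and T: "T \<in> proc_matrices n"
    and "0 < n" "0 < c"
  shows "ereal (exp_makespan n (marginal n P) T / (opt_makespan n T + c)) \<le> ratio_P (Suc n) P"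
proof -
  let ?T' = "add_task n T c"
  have T': "?T' \<in> proc_matrices (Suc n)"
    using add_task_proc_matrices[OF T \<open>0 < c\<close>] .
  have ps: "prob_space P" and sP: "sets P = sets (borel_vectors (Suc n))"
    using P by (auto simp: prob_measures_def)
  have E: "exp_makespan n (marginal n P) T = (\<integral>z. makespan n T (alloc n T z) \<partial>P)"
    using exp_makespan_marginal[OF P] by simp
  have "exp_makespan n (marginal n P) T \<le> exp_makespan (Suc n) P ?T'"
    unfolding E unfolding exp_makespan_def using \<open>0 < c\<close>
    by (intro integral_mono integrable_makespan_alloc[OF ps sP] T T' makespan_alloc_add_task) auto
  moreover have "0 \<le> exp_makespan n (marginal n P) T"
    unfolding E using makespan_nonneg[OF T alloc_subset] by (intro integral_nonneg_AE) auto
  moreover have "0 < opt_makespan (Suc n) ?T'"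
    using opt_makespan_pos[OF T'] by simp
  moreover have "opt_makespan (Suc n) ?T' \<le> opt_makespan n T + c"
    using opt_makespan_add_task \<open>0 < c\<close> by simp
  ultimately have "exp_makespan n (marginal n P) T / (opt_makespan n T + c)
      \<le> exp_makespan (Suc n) P ?T' / opt_makespan (Suc n) ?T'"
    by (intro frac_le) auto
  also have "ereal \<dots> \<le> ratio_P (Suc n) P"
    unfolding ratio_P_def using T' by (rule SUP_upper)
  finally show ?thesis by simp
qed

lemma ratio_P_marginal_le:
  assumes P: "P \<in> prob_measures (Suc n)" and "0 < n"
  shows "ratio_P n (marginal n P) \<le> ratio_P (Suc n) P"
  unfolding ratio_P_def[of n]
proof (rule SUP_least)
  fix T assume T: "T \<in> proc_matrices n"
  let ?E = "exp_makespan n (marginal n P) T" and ?O = "opt_makespan n T"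
  have "((\<lambda>c. ereal (?E / (?O + c))) \<longlongrightarrow> ereal (?E / (?O + 0))) (at_right 0)"
    using opt_makespan_pos[OF T \<open>0 < n\<close>] by (intro tendsto_intros) auto
  moreover have "\<forall>\<^sub>F c in at_right 0. ereal (?E / (?O + c)) \<le> ratio_P (Suc n) P"
    using eventually_at_right_less
    by eventually_elim (rule exp_makespan_marginal_le_ratio_P[OF P T \<open>0 < n\<close>])
  ultimately show "ereal (?E / ?O) \<le> ratio_P (Suc n) P"
    by (auto intro: tendsto_upperbound)
qed

theorem corollary4:
  fixes n :: nat
  assumes "n \<ge> 2"
  shows "ratio (Suc n) \<ge> ratio n"
  unfolding ratio_def
proof (rule INF_greatest)
  fix P assume P: "P \<in> prob_measures (Suc n)"
  have "0 < n" using assms by simp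
  show "(INF P\<in>prob_measures n. ratio_P n P) \<le> ratio_P (Suc n) P"
    using marginal_prob_measures[OF P] ratio_P_marginal_le[OF P \<open>0 < n\<close>]
    by (intro INF_lower2) auto
qed

end
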